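(* Let $T$ be a tree on $n\ge 3$ vertices. Then $$\frac{2}{n-1}\le \gamma(T)\le \frac{n}{2n-3}.$$ Equality holds in the lower bound if and only if $T$ is isomorphic to the path $P_n$, and equality holds in the upper bound if and only if $T$ is isomorphic to the star $S_n$.
   Context: For a finite simple undirected graph $G$ with $n$ vertices, let $\mathcal{F}=\{x\in\mathbb{R}^{V(G)} : \sum_{v} x_v = 0,\ \|x\|_\infty = 1\}$, for $x\in\mathcal{F}$ let $\gamma_x(G)=\max_{uv\in E(G)}|x_u-x_v|$, and $\gamma(G)=\min_{x\in\mathcal{F}}\gamma_x(G)$. The star $S_n$ is the tree on $n$ vertices with one vertex adjacent to all other $n-1$ vertices. *)

theory Defs
  imports Complex_Main
begin

definition simple_graph :: "'a set \<Rightarrow> 'a set set \<Rightarrow> bool" where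
  "simple_graph V E \<longleftrightarrow> finite V \<and>
     (\<forall>e\<in>E. \<exists>u v. e = {u, v} \<and> u \<noteq> v \<and> u \<in> V \<and> v \<in> V)"

definition connected_graph :: "'a set \<Rightarrow> 'a set set \<Rightarrow> bool" where
  "connected_graph V E \<longleftrightarrow>
     (\<forall>u\<in>V. \<forall>v\<in>V. (\<lambda>a b. {a, b} \<in> E)\<^sup>*\<^sup>* u v)"

definition has_cycle :: "'a set \<Rightarrow> 'a set set \<Rightarrow> bool" where
  "has_cycle V E \<longleftrightarrow> (\<exists>xs. length xs \<ge> 3 \<and> distinct xs \<and> set xs \<subseteq> V \<and>
     (\<forall>i. i + 1 < length xs \<longrightarrow> {xs ! i, xs ! (i + 1)} \<in> E) \<and>
     {last xs, hd xs} \<in> E)"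

definition is_tree :: "'a set \<Rightarrow> 'a set set \<Rightarrow> bool" where
  "is_tree V E \<longleftrightarrow> simple_graph V E \<and> V \<noteq> {} \<and> connected_graph V E \<and> \<not> has_cycle V E"

definition graph_iso :: "'a set \<Rightarrow> 'a set set \<Rightarrow> 'b set \<Rightarrow> 'b set set \<Rightarrow> bool" where
  "graph_iso V E W F \<longleftrightarrow> (\<exists>f. bij_betw f V W \<and>
     (\<forall>u\<in>V. \<forall>v\<in>V. {u, v} \<in> E \<longleftrightarrow> {f u, f v} \<in> F))"

definition path_edges :: "nat \<Rightarrow> nat set set" where
  "path_edges n = {{i, i + 1} | i. i + 1 < n}"

definition star_edges :: "nat \<Rightarrow> nat set set" where
  "star_edges n = {{0, i} | i. 0 < i \<and> i < n}"

text \<open>The feasible set F: vectors indexed by V (values outside V are irrelevant)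
  with zero sum and sup-norm 1.\<close>

definition feasible :: "'a set \<Rightarrow> ('a \<Rightarrow> real) set" where
  "feasible V = {x. (\<Sum>v\<in>V. x v) = 0 \<and> Max ((\<lambda>v. \<bar>x v\<bar>) ` V) = 1}"

definition gamma_x :: "'a set set \<Rightarrow> ('a \<Rightarrow> real) \<Rightarrow> real" where
  "gamma_x E x = Max {\<bar>x u - x v\<bar> | u v. {u, v} \<in> E}"

definition gamma :: "'a set \<Rightarrow> 'a set set \<Rightarrow> real" where
  "gamma V E = (INF x\<in>feasible V. gamma_x E x)"

end

(*
  For feasible x choose u with |x u| = 1. Along a shortest walk x changes by at most
  gamma_x per edge, so summing over all vertices and using that x sums to 0 gives
  n <= gamma_x * D(u), where the transmission D(u) is the sum of the distances from u.
  In a connected graph the distances from u take every value between 0 and their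
  maximum, hence D(u) <= n(n-1)/2, with equality only if they are exactly 0, ..., n-1,
  i.e. the graph is a path; if some vertex is adjacent to all others, D(u) <= 2n-3.

  Conversely, the linear vector along the path attains 2/(n-1). For a tree, the tent
  vector max(1 - d dist(v,z), -1) centred at a leaf v, with d <= n/(2n-3) chosen so that
  its sum vanishes, has gamma_x <= d; here d < n/(2n-3) as soon as some vertex is at
  distance 3 from v, which is the case unless the tree is a star.
*)
theory Submission
  imports Defs "HOL-Combinatorics.Transposition"
begin

definition adj :: "'a set set \<Rightarrow> 'a \<Rightarrow> 'a \<Rightarrow> bool" where
  "adj E a b \<longleftrightarrow> {a, b} \<in> E"

definition graph_dist :: "'a set set \<Rightarrow> 'a \<Rightarrow> 'a \<Rightarrow> nat" where
  "graph_dist E u w = (LEAST k. (adj E ^^ k) u w)"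

definition transmission :: "'a set \<Rightarrow> 'a set set \<Rightarrow> 'a \<Rightarrow> nat" where
  "transmission V E u = (\<Sum>w\<in>V. graph_dist E u w)"

definition graph_path :: "'a set \<Rightarrow> 'a set set \<Rightarrow> 'a list \<Rightarrow> bool" where
  "graph_path V E xs \<longleftrightarrow> distinct xs \<and> set xs \<subseteq> V \<and>
     (\<forall>i. i + 1 < length xs \<longrightarrow> {xs ! i, xs ! (i + 1)} \<in> E)"

lemma has_cycle_iff_closed_path:
  "has_cycle V E \<longleftrightarrow> (\<exists>xs. 3 \<le> length xs \<and> graph_path V E xs \<and> {last xs, hd xs} \<in> E)"
  unfolding has_cycle_def graph_path_def by (simp add: conj_ac)

lemma graph_path_take: "graph_path V E xs \<Longrightarrow> graph_path V E (take k xs)"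
  unfolding graph_path_def by (auto dest: in_set_takeD)

lemma graph_path_Cons:
  assumes "graph_path V E xs" "xs \<noteq> []" "x \<in> V" "x \<notin> set xs" "{x, hd xs} \<in> E"
  shows "graph_path V E (x # xs)"
  unfolding graph_path_def
proof (intro conjI allI impI)
  fix i assume "i + 1 < length (x # xs)"
  then show "{(x # xs) ! i, (x # xs) ! (i + 1)} \<in> E"
    using assms unfolding graph_path_def by (cases i) (auto simp: hd_conv_nth)
qed (use assms in \<open>auto simp: graph_path_def\<close>)

lemma graph_dist_le: "(adj E ^^ k) u w \<Longrightarrow> graph_dist E u w \<le> k"
  unfolding graph_dist_def by (rule Least_le)

lemma graph_dist_self [simp]: "graph_dist E u u = 0"
  using graph_dist_le[of 0 E u u] by simp

lemma diff_le_walk_length: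
  fixes x :: "'a \<Rightarrow> real"
  assumes "\<And>a b. {a, b} \<in> E \<Longrightarrow> \<bar>x a - x b\<bar> \<le> d"
  shows "(adj E ^^ k) u w \<Longrightarrow> \<bar>x u - x w\<bar> \<le> real k * d"
proof (induction k arbitrary: w)
  case (Suc k)
  from Suc.prems obtain c where "(adj E ^^ k) u c" "adj E c w"
    by (rule relpowp_Suc_E)
  then have "(adj E ^^ k) u c" "{c, w} \<in> E"
    by (simp_all add: adj_def)
  with Suc.IH[of c] assms[of c w] show ?case
    by (simp add: algebra_simps)
qed simp

definition pred_closed :: "'a set \<Rightarrow> ('a \<Rightarrow> nat) \<Rightarrow> bool" where
  "pred_closed V g \<longleftrightarrow> (\<forall>w\<in>V. 0 < g w \<longrightarrow> (\<exists>w'\<in>V. g w' = g w - 1))"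

lemma pred_closed_Diff_max:
  assumes "pred_closed A g" "\<And>w. w \<in> A \<Longrightarrow> g w \<le> g a"
  shows "pred_closed (A - {a}) g"
  unfolding pred_closed_def
proof (intro ballI impI)
  fix w assume w: "w \<in> A - {a}" "0 < g w"
  then obtain w' where "w' \<in> A" "g w' = g w - 1"
    using assms(1) unfolding pred_closed_def by blast
  moreover have "g w \<le> g a" using assms(2) w(1) by blast
  ultimately show "\<exists>w'\<in>A - {a}. g w' = g w - 1"
    using w(2) by (intro bexI[of _ w']) auto
qed

text \<open>The values of a predecessor-closed \<open>g\<close>, sorted increasingly, are bounded
  by \<open>0, 1, \<dots>, card V - 1\<close>.\<close>

lemma sum_bound_if_pred_closed:
  fixes g :: "'a \<Rightarrow> nat"
  assumes "finite V" "pred_closed V g"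
  shows "2 * sum g V \<le> card V * (card V - 1) \<and> (\<forall>w\<in>V. g w < card V) \<and>
    (2 * sum g V = card V * (card V - 1) \<longrightarrow> bij_betw g V {0..<card V})"
  using assms
proof (induction V rule: finite_remove_induct)
  case (remove A)
  have "Max (g ` A) \<in> g ` A"
    using remove.hyps(1,2) by simp
  then obtain a where a: "a \<in> A" "g a = Max (g ` A)"
    by (metis imageE)
  have a_max: "g w \<le> g a" if "w \<in> A" for w
    using a(2) remove.hyps(1) that by simp
  let ?B = "A - {a}"
  define m where "m = card ?B"
  have IH: "2 * sum g ?B \<le> m * (m - 1)" "\<And>w. w \<in> ?B \<Longrightarrow> g w < m"
    "2 * sum g ?B = m * (m - 1) \<Longrightarrow> bij_betw g ?B {0..<m}"
    using remove.IH[OF a(1) pred_closed_Diff_max[OF remove.prems a_max]] unfolding m_def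
    by blast+
  have card_A: "card A = Suc m"
    using remove.hyps(1) a(1) unfolding m_def by (rule card_Suc_Diff1[symmetric])
  have ga: "g a \<le> m"
  proof (cases "g a = 0")
    case False
    then obtain w' where w': "w' \<in> A" "g w' = g a - 1"
      using remove.prems a(1) unfolding pred_closed_def by blast
    then have "w' \<in> ?B" using False by auto
    then show ?thesis using IH(2) w'(2) by fastforce
  qed simp
  have sum_A: "sum g A = sum g ?B + g a"
    using a(1) remove.hyps(1) by (simp add: sum.remove)
  have arith: "m * (m - 1) + 2 * m = Suc m * m" by (cases m) auto
  have "bij_betw g A {0..<Suc m}" if "2 * sum g A = Suc m * m"
  proof -
    have "g a = m" "2 * sum g ?B = m * (m - 1)"
      using IH(1) ga sum_A arith that by linarith+
    then have "bij_betw g (?B \<union> {a}) ({0..<m} \<union> {m})"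
      using IH(3) notIn_Un_bij_betw[of a ?B g "{0..<m}"] by simp
    moreover have "?B \<union> {a} = A" using a(1) by blast
    ultimately show ?thesis by (simp add: atLeast0_lessThan_Suc)
  qed
  moreover have "g w < Suc m" if "w \<in> A" for w
    using IH(2)[of w] ga that by (cases "w = a") auto
  moreover have "2 * sum g A \<le> Suc m * m"
    using IH(1) ga sum_A arith by linarith
  ultimately show ?case
    using card_A by simp
qed (simp add: bij_betw_def)

lemma card_ge_2_obtain_distinct:
  assumes "2 \<le> card A"
  obtains a b where "a \<in> A" "b \<in> A" "a \<noteq> b"
proof -
  have "finite A" "\<not> card A \<le> Suc 0"
    using assms card.infinite by fastforce+
  then show ?thesis
    using that card_le_Suc0_iff_eq by blast
qed

lemma feasibleI:
  assumes "finite V" "(\<Sum>v\<in>V. x v) = 0" "\<And>v. v \<in> V \<Longrightarrow> \<bar>x v\<bar> \<le> 1" "a \<in> V" "\<bar>x a\<bar> = 1"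
  shows "x \<in> feasible V"
  unfolding feasible_def using assms by (auto intro!: Max_eqI)

lemma feasible_nonempty:
  assumes "2 \<le> card V"
  shows "feasible V \<noteq> {}"
proof -
  have fin: "finite V"
    using assms card.infinite by fastforce
  obtain a b where ab: "a \<in> V" "b \<in> V" "a \<noteq> b"
    using assms by (rule card_ge_2_obtain_distinct)
  define x :: "'a \<Rightarrow> real" where "x z = (if z = a then 1 else 0) - (if z = b then 1 else 0)" for z
  have "(\<Sum>z\<in>V. x z) = 0"
    using fin ab by (simp add: x_def sum_subtractf)
  then have "x \<in> feasible V"
    using fin ab by (intro feasibleI[of V x a]) (auto simp: x_def)
  then show ?thesis by blast
qed

lemma linear_labelling_feasible:
  assumes bij: "bij_betw f V {0..<Suc m}" and "0 < m"
  shows "(\<lambda>z. 1 - 2 * real (f z) / real m) \<in> feasible V"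
proof -
  have "2 * (\<Sum>z\<in>V. real (f z)) = 2 * (\<Sum>i = 0..m. real i)"
    using sum.reindex_bij_betw[OF bij, of real] by (simp add: atLeastLessThanSuc_atLeastAtMost)
  also have "\<dots> = real m * (real m + 1)"
    by (rule double_gauss_sum)
  finally have gauss: "(\<Sum>z\<in>V. real (f z)) = real m * (real m + 1) / 2"
    by simp
  have card: "card V = Suc m"
    using bij_betw_same_card[OF bij] by simp
  have "(\<Sum>z\<in>V. 1 - 2 * real (f z) / real m) = real (card V) - 2 * (\<Sum>z\<in>V. real (f z)) / real m"
    by (simp add: sum_subtractf sum_divide_distrib[symmetric] sum_distrib_left)
  also have "\<dots> = 0"
    using gauss card assms(2) by (simp add: field_simps)
  finally have "(\<Sum>z\<in>V. 1 - 2 * real (f z) / real m) = 0" .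
  moreover have "\<bar>1 - 2 * real (f z) / real m\<bar> \<le> 1" if "z \<in> V" for z
    using bij_betw_apply[OF bij that] assms(2) by (simp add: abs_le_iff field_simps)
  moreover obtain z0 where "z0 \<in> V" "f z0 = 0"
    using bij by (metis atLeastLessThan_iff bij_betw_iff_bijections zero_less_Suc le0)
  ultimately show ?thesis
    using bij_betw_finite[OF bij] by (intro feasibleI[of V _ z0]) auto
qed

lemma le_gamma:
  assumes "2 \<le> card V" "\<And>x. x \<in> feasible V \<Longrightarrow> L \<le> gamma_x E x"
  shows "L \<le> gamma V E"
  unfolding gamma_def using feasible_nonempty[OF assms(1)] assms(2) by (rule cINF_greatest)

locale connected_simple_graph =
  fixes V :: "'a set" and E :: "'a set set"
  assumes simple: "simple_graph V E" and connected: "connected_graph V E"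
begin

lemma finite_V: "finite V"
  using simple by (simp add: simple_graph_def)

lemma edge_vertices:
  assumes "{a, b} \<in> E"
  shows "a \<in> V" "b \<in> V" "a \<noteq> b"
  using simple assms unfolding simple_graph_def by (auto simp: doubleton_eq_iff)

lemma obtain_edge:
  assumes "E \<noteq> {}"
  obtains a b where "{a, b} \<in> E"
proof -
  obtain e where e: "e \<in> E" using assms by blast
  then obtain a b where "e = {a, b}"
    using simple unfolding simple_graph_def by meson
  then show ?thesis using that e by simp
qed

lemma walk_graph_dist:
  assumes "u \<in> V" "w \<in> V"
  shows "(adj E ^^ graph_dist E u w) u w"
proof -
  have "adj E = (\<lambda>a b. {a, b} \<in> E)"
    by (simp add: fun_eq_iff adj_def)
  then have "(adj E)\<^sup>*\<^sup>* u w"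
    using connected assms unfolding connected_graph_def by simp
  then obtain k where "(adj E ^^ k) u w"
    by (metis rtranclp_imp_relpowp)
  then show ?thesis
    unfolding graph_dist_def by (rule LeastI)
qed

lemma graph_dist_edge_le:
  assumes "u \<in> V" "{a, b} \<in> E"
  shows "graph_dist E u b \<le> graph_dist E u a + 1"
proof -
  have "(adj E ^^ Suc (graph_dist E u a)) u b"
    using walk_graph_dist[OF assms(1) edge_vertices(1)[OF assms(2)]] assms(2)
    by (auto simp: adj_def)
  then show ?thesis
    using graph_dist_le by fastforce
qed

lemma graph_dist_edge_diff:
  assumes "u \<in> V" "{a, b} \<in> E"
  shows "\<bar>real (graph_dist E u a) - real (graph_dist E u b)\<bar> \<le> 1"
  using graph_dist_edge_le[OF assms] graph_dist_edge_le[OF assms(1), of b a] assms(2)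
  by (simp add: insert_commute)

lemma graph_dist_eq_0_iff:
  assumes "u \<in> V" "w \<in> V"
  shows "graph_dist E u w = 0 \<longleftrightarrow> w = u"
  using walk_graph_dist[OF assms] by auto

lemma graph_dist_SucE:
  assumes "u \<in> V" "w \<in> V" "graph_dist E u w = Suc k"
  obtains c where "c \<in> V" "{c, w} \<in> E" "graph_dist E u c = k"
proof -
  have "(adj E ^^ Suc k) u w"
    using walk_graph_dist[OF assms(1,2)] assms(3) by simp
  then obtain c where c: "(adj E ^^ k) u c" "adj E c w"
    by (rule relpowp_Suc_E)
  then have edge: "{c, w} \<in> E" by (simp add: adj_def)
  have "graph_dist E u c \<le> k" by (rule graph_dist_le[OF c(1)])
  moreover have "Suc k \<le> graph_dist E u c + 1"
    using graph_dist_edge_le[OF assms(1) edge] assms(3) by simp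
  ultimately show ?thesis
    using that edge_vertices(1)[OF edge] edge by simp
qed

lemma graph_dist_eq_1_iff:
  assumes "u \<in> V" "w \<in> V"
  shows "graph_dist E u w = 1 \<longleftrightarrow> {u, w} \<in> E"
proof
  assume "graph_dist E u w = 1"
  then obtain c where "c \<in> V" "{c, w} \<in> E" "graph_dist E u c = 0"
    using graph_dist_SucE[OF assms] by auto
  then show "{u, w} \<in> E"
    using graph_dist_eq_0_iff[OF assms(1)] by auto
next
  assume edge: "{u, w} \<in> E"
  then have "graph_dist E u w \<le> 1"
    using graph_dist_edge_le[OF assms(1) edge] by simp
  moreover have "graph_dist E u w \<noteq> 0"
    using graph_dist_eq_0_iff[OF assms] edge_vertices(3)[OF edge] by simp
  ultimately show "graph_dist E u w = 1" by simp
qed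

lemma graph_dist_from_leaf_ge_2:
  assumes leaf: "\<And>z. {v, z} \<in> E \<Longrightarrow> z = w"
    and "v \<in> V" "z \<in> V" "z \<noteq> v" "z \<noteq> w"
  shows "2 \<le> graph_dist E v z"
proof -
  have "graph_dist E v z \<noteq> 0" "graph_dist E v z \<noteq> 1"
    using assms graph_dist_eq_0_iff graph_dist_eq_1_iff by blast+
  then show ?thesis by simp
qed

lemma edges_nonempty:
  assumes "2 \<le> card V"
  shows "E \<noteq> {}"
proof -
  obtain u w where uw: "u \<in> V" "w \<in> V" "u \<noteq> w"
    using assms by (rule card_ge_2_obtain_distinct)
  then obtain k where "graph_dist E u w = Suc k"
    using graph_dist_eq_0_iff[OF uw(1,2)] not0_implies_Suc by blast
  then show ?thesis
    using graph_dist_SucE[OF uw(1,2)] by blast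
qed

lemma transmission_bounds:
  assumes "u \<in> V"
  shows "2 * transmission V E u \<le> card V * (card V - 1)"
    and "\<And>w. w \<in> V \<Longrightarrow> graph_dist E u w < card V"
    and "2 * transmission V E u = card V * (card V - 1) \<Longrightarrow>
      bij_betw (graph_dist E u) V {0..<card V}"
proof -
  have "pred_closed V (graph_dist E u)"
    unfolding pred_closed_def
  proof (intro ballI impI)
    fix w assume "w \<in> V" "0 < graph_dist E u w"
    then show "\<exists>w'\<in>V. graph_dist E u w' = graph_dist E u w - 1"
      using graph_dist_SucE[OF assms \<open>w \<in> V\<close>] gr0_implies_Suc by (metis diff_Suc_1)
  qed
  from sum_bound_if_pred_closed[OF finite_V this]
  show "2 * transmission V E u \<le> card V * (card V - 1)"
    and "\<And>w. w \<in> V \<Longrightarrow> graph_dist E u w < card V"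
    and "2 * transmission V E u = card V * (card V - 1) \<Longrightarrow>
      bij_betw (graph_dist E u) V {0..<card V}"
    unfolding transmission_def by blast+
qed

lemma finite_edge_diffs: "finite {\<bar>x u - x v\<bar> | u v. {u, v} \<in> E}"
proof -
  have "{\<bar>x u - x v\<bar> | u v. {u, v} \<in> E} \<subseteq> (\<lambda>(u, v). \<bar>x u - x v\<bar>) ` (V \<times> V)"
    using edge_vertices by fastforce
  then show ?thesis
    using finite_V by (meson finite_SigmaI finite_imageI finite_subset)
qed

lemma edge_diff_le_gamma_x: "{a, b} \<in> E \<Longrightarrow> \<bar>x a - x b\<bar> \<le> gamma_x E x"
  unfolding gamma_x_def by (rule Max_ge[OF finite_edge_diffs]) blast

lemma gamma_x_le:
  assumes "E \<noteq> {}" "\<And>a b. {a, b} \<in> E \<Longrightarrow> \<bar>x a - x b\<bar> \<le> d"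
  shows "gamma_x E x \<le> d"
proof -
  obtain a b where "{a, b} \<in> E"
    using assms(1) by (rule obtain_edge)
  then have "{\<bar>x u - x v\<bar> | u v. {u, v} \<in> E} \<noteq> {}" by blast
  then show ?thesis
    unfolding gamma_x_def using finite_edge_diffs assms(2) by (auto intro: Max.boundedI)
qed

lemma gamma_x_nonneg: "E \<noteq> {} \<Longrightarrow> 0 \<le> gamma_x E x"
  by (metis obtain_edge edge_diff_le_gamma_x abs_ge_zero order_trans)

lemma gamma_le_gamma_x: "E \<noteq> {} \<Longrightarrow> x \<in> feasible V \<Longrightarrow> gamma V E \<le> gamma_x E x"
  unfolding gamma_def by (rule cINF_lower) (auto intro: bdd_belowI2 gamma_x_nonneg)

lemma diff_le_graph_dist_gamma_x:
  assumes "u \<in> V" "w \<in> V"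
  shows "\<bar>x u - x w\<bar> \<le> real (graph_dist E u w) * gamma_x E x"
  by (rule diff_le_walk_length[OF edge_diff_le_gamma_x walk_graph_dist[OF assms]])

text \<open>Summing \<open>s x w \<ge> 1 - graph_dist E u w \<cdot> gamma_x E x\<close> over \<open>w\<close>, where
  \<open>s = x u = \<plusminus>1\<close>, and using \<open>\<Sum>w. x w = 0\<close>.\<close>

lemma card_le_gamma_x_transmission:
  assumes "x \<in> feasible V" "V \<noteq> {}"
  obtains u where "u \<in> V" "real (card V) \<le> gamma_x E x * real (transmission V E u)"
proof -
  have sum0: "(\<Sum>v\<in>V. x v) = 0" and max1: "Max ((\<lambda>v. \<bar>x v\<bar>) ` V) = 1"
    using assms(1) by (auto simp: feasible_def)
  have "1 \<in> (\<lambda>v. \<bar>x v\<bar>) ` V"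
    using Max_in[of "(\<lambda>v. \<bar>x v\<bar>) ` V"] finite_V assms(2) max1 by simp
  then obtain u where u: "u \<in> V" "\<bar>x u\<bar> = 1"
    by (metis imageE)
  let ?s = "x u" and ?g = "gamma_x E x"
  have "1 - real (graph_dist E u w) * ?g \<le> ?s * x w" if "w \<in> V" for w
  proof -
    have "?s * x u = 1" using u(2) by (metis abs_mult_self_eq mult_1)
    moreover have "\<bar>?s * (x u - x w)\<bar> \<le> real (graph_dist E u w) * ?g"
      using diff_le_graph_dist_gamma_x[OF u(1) that] u(2) by (simp add: abs_mult)
    ultimately show ?thesis by (simp add: right_diff_distrib abs_le_iff)
  qed
  then have "(\<Sum>w\<in>V. 1 - real (graph_dist E u w) * ?g) \<le> (\<Sum>w\<in>V. ?s * x w)"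
    by (rule sum_mono)
  also have "\<dots> = 0" using sum0 by (simp add: sum_distrib_left[symmetric])
  finally have "real (card V) \<le> ?g * real (transmission V E u)"
    by (simp add: transmission_def sum_subtractf sum_distrib_left[symmetric] mult.commute)
  then show ?thesis using that u(1) by blast
qed

lemma card_div_le_gamma:
  assumes "2 \<le> card V" "0 < B" "\<And>u. u \<in> V \<Longrightarrow> real (transmission V E u) \<le> B"
  shows "real (card V) / B \<le> gamma V E"
proof (rule le_gamma[OF assms(1)])
  fix x assume x: "x \<in> feasible V"
  have "V \<noteq> {}" using assms(1) by auto
  then obtain u where u: "u \<in> V" "real (card V) \<le> gamma_x E x * real (transmission V E u)"
    using card_le_gamma_x_transmission[OF x] by blast
  have "0 \<le> gamma_x E x"
    using gamma_x_nonneg edges_nonempty[OF assms(1)] by blast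
  then have "real (card V) \<le> gamma_x E x * B"
    using u(2) assms(3)[OF u(1)] by (meson mult_left_mono order_trans)
  then show "real (card V) / B \<le> gamma_x E x"
    using assms(2) by (simp add: divide_le_eq mult.commute)
qed

lemma path_iso_if_bij_graph_dist:
  assumes u: "u \<in> V" and bij: "bij_betw (graph_dist E u) V {0..<card V}"
  shows "graph_iso V E {0..<card V} (path_edges (card V))"
  unfolding graph_iso_def
proof (intro exI[of _ "graph_dist E u"] conjI ballI)
  let ?f = "graph_dist E u"
  have inj: "inj_on ?f V" using bij by (simp add: bij_betw_def)
  have step: "{a, b} \<in> E \<longleftrightarrow> ?f b = ?f a + 1 \<or> ?f a = ?f b + 1" if ab: "a \<in> V" "b \<in> V" for a b
  proof
    assume edge: "{a, b} \<in> E"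
    then have "?f a \<noteq> ?f b"
      using inj ab edge_vertices(3) inj_on_eq_iff by metis
    then show "?f b = ?f a + 1 \<or> ?f a = ?f b + 1"
      using graph_dist_edge_le[OF u edge] graph_dist_edge_le[OF u, of b a] edge
      by (auto simp: insert_commute)
  next
    have pred_edge: "{p, q} \<in> E" if pq: "p \<in> V" "q \<in> V" "?f q = ?f p + 1" for p q
    proof -
      obtain c where "c \<in> V" "{c, q} \<in> E" "?f c = ?f p"
        using graph_dist_SucE[OF u pq(2)] pq(3) by auto
      then show ?thesis using inj pq(1) inj_on_eq_iff by metis
    qed
    assume "?f b = ?f a + 1 \<or> ?f a = ?f b + 1"
    then show "{a, b} \<in> E"
      using pred_edge[OF ab] pred_edge[OF ab(2,1)] by (auto simp: insert_commute)
  qed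
  fix a b assume ab: "a \<in> V" "b \<in> V"
  have "?f a < card V" "?f b < card V"
    using bij ab by (auto dest: bij_betw_apply)
  then show "{a, b} \<in> E \<longleftrightarrow> {?f a, ?f b} \<in> path_edges (card V)"
    unfolding step[OF ab] path_edges_def by (auto simp: doubleton_eq_iff)
qed (use bij in simp)

lemma path_bound_le_gamma:
  assumes "2 \<le> card V"
  shows "2 / (real (card V) - 1) \<le> gamma V E"
proof -
  let ?n = "real (card V)"
  have "?n / (?n * (?n - 1) / 2) \<le> gamma V E"
  proof (rule card_div_le_gamma[OF assms])
    show "0 < ?n * (?n - 1) / 2" using assms by simp
    fix u assume "u \<in> V"
    then have "real (2 * transmission V E u) \<le> real (card V * (card V - 1))"
      using transmission_bounds(1) of_nat_mono by blast
    then show "real (transmission V E u) \<le> ?n * (?n - 1) / 2"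
      using assms by (simp add: of_nat_diff)
  qed
  moreover have "?n / (?n * (?n - 1) / 2) = 2 / (?n - 1)"
    using assms by (simp add: field_simps)
  ultimately show ?thesis by simp
qed

lemma path_bound_less_gamma:
  assumes "2 \<le> card V" and not_path: "\<not> graph_iso V E {0..<card V} (path_edges (card V))"
  shows "2 / (real (card V) - 1) < gamma V E"
proof -
  let ?n = "real (card V)"
  have pos: "0 < ?n * (?n - 1) - 1"
  proof -
    have "2 * 1 \<le> ?n * (?n - 1)" using assms(1) by (intro mult_mono) auto
    then show ?thesis by simp
  qed
  have "?n / ((?n * (?n - 1) - 1) / 2) \<le> gamma V E"
  proof (rule card_div_le_gamma[OF assms(1)])
    show "0 < (?n * (?n - 1) - 1) / 2" using pos by simp
    fix u assume u: "u \<in> V"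
    have "2 * transmission V E u \<noteq> card V * (card V - 1)"
      using transmission_bounds(3)[OF u] path_iso_if_bij_graph_dist[OF u] not_path by blast
    then have "2 * transmission V E u + 1 \<le> card V * (card V - 1)"
      using transmission_bounds(1)[OF u] by linarith
    then have "real (2 * transmission V E u + 1) \<le> real (card V * (card V - 1))"
      by (rule of_nat_mono)
    then show "real (transmission V E u) \<le> (?n * (?n - 1) - 1) / 2"
      using assms(1) by (simp add: of_nat_diff)
  qed
  moreover have "2 / (?n - 1) < ?n / ((?n * (?n - 1) - 1) / 2)"
    using assms(1) pos by (simp add: field_simps)
  ultimately show ?thesis by simp
qed

lemma gamma_le_path_bound_if_path_iso:
  assumes "2 \<le> card V" "graph_iso V E {0..<card V} (path_edges (card V))"
  shows "gamma V E \<le> 2 / (real (card V) - 1)"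
proof -
  obtain f where bij: "bij_betw f V {0..<card V}"
    and edges: "\<And>a b. a \<in> V \<Longrightarrow> b \<in> V \<Longrightarrow> {a, b} \<in> E \<longleftrightarrow> {f a, f b} \<in> path_edges (card V)"
    using assms(2) unfolding graph_iso_def by blast
  obtain m where m: "card V = Suc m" "0 < m"
    using assms(1) by (cases "card V") auto
  define x where "x z = 1 - 2 * real (f z) / real m" for z
  have feasible: "x \<in> feasible V"
    unfolding x_def using linear_labelling_feasible bij m by simp
  have "\<bar>x a - x b\<bar> \<le> 2 / real m" if edge: "{a, b} \<in> E" for a b
  proof -
    have "{f a, f b} \<in> path_edges (card V)"
      using edges edge edge_vertices[OF edge] by blast
    then have unit: "\<bar>real (f b) - real (f a)\<bar> = 1"
      unfolding path_edges_def by (auto simp: doubleton_eq_iff)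
    have xab: "x a - x b = 2 * (real (f b) - real (f a)) / real m"
      by (simp add: x_def diff_divide_distrib right_diff_distrib)
    show ?thesis
      unfolding xab abs_divide abs_mult unit by simp
  qed
  then have "gamma_x E x \<le> 2 / real m"
    using gamma_x_le edges_nonempty[OF assms(1)] by blast
  then show ?thesis
    using gamma_le_gamma_x[OF edges_nonempty[OF assms(1)] feasible] m(1) by simp
qed

lemma gamma_eq_path_bound_iff:
  assumes "2 \<le> card V"
  shows "gamma V E = 2 / (real (card V) - 1) \<longleftrightarrow>
    graph_iso V E {0..<card V} (path_edges (card V))"
  using path_bound_le_gamma path_bound_less_gamma gamma_le_path_bound_if_path_iso assms
  by (metis order_less_irrefl order_antisym)

end

definition tent :: "'a set set \<Rightarrow> 'a \<Rightarrow> real \<Rightarrow> 'a \<Rightarrow> real" where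
  "tent E v d z = max (1 - d * real (graph_dist E v z)) (-1)"

context connected_simple_graph
begin

lemma gamma_x_tent_le:
  assumes "E \<noteq> {}" "v \<in> V" "0 \<le> d"
  shows "gamma_x E (tent E v d) \<le> d"
proof (rule gamma_x_le[OF assms(1)])
  fix a b assume edge: "{a, b} \<in> E"
  let ?da = "real (graph_dist E v a)" and ?db = "real (graph_dist E v b)"
  have "(1 - d * ?da) - (1 - d * ?db) = d * (?db - ?da)"
    by (simp add: algebra_simps)
  moreover have "d * \<bar>?db - ?da\<bar> \<le> d * 1"
    using graph_dist_edge_diff[OF assms(2) edge] assms(3)
    by (intro mult_left_mono) (simp_all add: abs_minus_commute)
  ultimately have "\<bar>(1 - d * ?da) - (1 - d * ?db)\<bar> \<le> d"
    using assms(3) by (simp add: abs_mult)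
  then show "\<bar>tent E v d a - tent E v d b\<bar> \<le> d"
    unfolding tent_def max_def abs_le_iff by auto
qed

lemma tent_feasible:
  assumes "v \<in> V" "0 \<le> d" "(\<Sum>z\<in>V. tent E v d z) = 0"
  shows "tent E v d \<in> feasible V"
proof (rule feasibleI[OF finite_V assms(3) _ assms(1)])
  fix z
  have "0 \<le> d * real (graph_dist E v z)" using assms(2) by simp
  then show "\<bar>tent E v d z\<bar> \<le> 1"
    unfolding tent_def by (simp add: abs_le_iff)
qed (simp add: tent_def)

lemma tent_zero_sum:
  assumes "v \<in> V" "0 \<le> d0" "(\<Sum>z\<in>V. tent E v d0 z) \<le> 0"
  obtains d where "0 \<le> d" "d \<le> d0" "(\<Sum>z\<in>V. tent E v d z) = 0"
proof -
  have "0 \<le> (\<Sum>z\<in>V. tent E v 0 z)"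
    by (simp add: tent_def)
  moreover have "continuous_on {0..d0} (\<lambda>d. \<Sum>z\<in>V. tent E v d z)"
    unfolding tent_def by (intro continuous_intros)
  ultimately show ?thesis
    using IVT2'[of "\<lambda>d. \<Sum>z\<in>V. tent E v d z" d0 0 0] assms(2,3) that by blast
qed

lemma tent_sum_split_edge:
  assumes edge: "{v, w} \<in> E" and "d \<le> 2"
  shows "(\<Sum>z\<in>V. tent E v d z) = 2 - d + (\<Sum>z\<in>V - {v, w}. tent E v d z)"
proof -
  have v: "v \<in> V" and w: "w \<in> V" "w \<noteq> v"
    using edge_vertices[OF edge] by auto
  have "(\<Sum>z\<in>V. tent E v d z) = tent E v d v + tent E v d w + (\<Sum>z\<in>V - {v, w}. tent E v d z)"
    using finite_V v w by (simp add: sum.remove insert_Diff_if Diff_insert2[symmetric])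
  moreover have "graph_dist E v w = 1"
    using graph_dist_eq_1_iff[OF v w(1)] edge by simp
  ultimately show ?thesis
    using assms(2) by (simp add: tent_def)
qed

lemma tent_sum_at_leaf:
  assumes edge: "{v, w} \<in> E" and leaf: "\<And>z. {v, z} \<in> E \<Longrightarrow> z = w"
    and d: "0 \<le> d" "d \<le> 1"
  shows "(\<Sum>z\<in>V. tent E v d z) \<le> real (card V) - d * (2 * real (card V) - 3)"
    and "0 < d \<Longrightarrow> d < 1 \<Longrightarrow> z0 \<in> V \<Longrightarrow> 3 \<le> graph_dist E v z0 \<Longrightarrow>
      (\<Sum>z\<in>V. tent E v d z) < real (card V) - d * (2 * real (card V) - 3)"
proof -
  define R where "R = V - {v, w}"
  have v: "v \<in> V" and w: "w \<in> V" "w \<noteq> v"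
    using edge_vertices[OF edge] by auto
  have "card R = card V - 2" "2 \<le> card V"
    using finite_V v w card_mono[OF finite_V, of "{v, w}"] by (auto simp: R_def card_Diff_subset)
  then have "2 - d + real (card R) * (1 - 2 * d) = real (card V) - d * (2 * real (card V) - 3)"
    by (simp add: of_nat_diff algebra_simps)
  moreover have split: "(\<Sum>z\<in>V. tent E v d z) = 2 - d + (\<Sum>z\<in>R. tent E v d z)"
    unfolding R_def using tent_sum_split_edge[OF edge] d(2) by simp
  moreover have term_R: "tent E v d z \<le> 1 - 2 * d" if "z \<in> R" for z
  proof -
    have "d * 2 \<le> d * real (graph_dist E v z)"
      using graph_dist_from_leaf_ge_2[OF leaf v] that d(1) by (intro mult_left_mono) (auto simp: R_def)
    then show ?thesis using d(2) by (simp add: tent_def)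
  qed
  ultimately show "(\<Sum>z\<in>V. tent E v d z) \<le> real (card V) - d * (2 * real (card V) - 3)"
    using sum_bounded_above[of R "tent E v d" "1 - 2 * d"] by simp
  assume strict: "0 < d" "d < 1" and z0: "z0 \<in> V" "3 \<le> graph_dist E v z0"
  have "graph_dist E v w = 1"
    using graph_dist_eq_1_iff[OF v w(1)] edge by simp
  then have "z0 \<in> R"
    using z0 by (auto simp: R_def)
  moreover have "tent E v d z0 < 1 - 2 * d"
  proof -
    have "d * 3 \<le> d * real (graph_dist E v z0)"
      using z0(2) strict(1) by (intro mult_left_mono) simp_all
    then show ?thesis using strict by (simp add: tent_def)
  qed
  ultimately have "(\<Sum>z\<in>R. tent E v d z) < (\<Sum>z\<in>R. 1 - 2 * d)"
    using finite_V term_R by (intro sum_strict_mono_ex1) (auto simp: R_def)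
  with split \<open>2 - d + real (card R) * (1 - 2 * d) = _\<close>
  show "(\<Sum>z\<in>V. tent E v d z) < real (card V) - d * (2 * real (card V) - 3)"
    by simp
qed

lemma leaf_neighbour_universal:
  assumes edge: "{v, w} \<in> E" and leaf: "\<And>z. {v, z} \<in> E \<Longrightarrow> z = w"
    and near: "\<And>z. z \<in> V \<Longrightarrow> graph_dist E v z \<le> 2"
    and z: "z \<in> V" "z \<noteq> w"
  shows "{w, z} \<in> E"
proof (cases "z = v")
  case True
  then show ?thesis using edge by (simp add: insert_commute)
next
  case False
  have v: "v \<in> V" using edge_vertices(1)[OF edge] .
  have "graph_dist E v z = Suc 1"
    using graph_dist_from_leaf_ge_2[OF leaf v z(1) False z(2)] near[OF z(1)] by simp
  then obtain c where c: "c \<in> V" "{c, z} \<in> E" "graph_dist E v c = 1"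
    using graph_dist_SucE[OF v z(1)] by blast
  then have "c = w"
    using graph_dist_eq_1_iff[OF v c(1)] leaf by blast
  then show ?thesis using c(2) by simp
qed

lemma transmission_le_if_universal:
  assumes c: "c \<in> V" "\<And>z. z \<in> V \<Longrightarrow> z \<noteq> c \<Longrightarrow> {c, z} \<in> E"
    and u: "u \<in> V" and "2 \<le> card V"
  shows "transmission V E u \<le> 2 * card V - 3"
proof -
  have dist_c: "graph_dist E u c \<le> 1"
  proof (cases "u = c")
    case False
    then have "{u, c} \<in> E" using c(2)[OF u] by (simp add: insert_commute)
    then show ?thesis using graph_dist_eq_1_iff[OF u c(1)] by simp
  qed simp
  have dist_le_2: "graph_dist E u z \<le> 2" if "z \<in> V" "z \<noteq> c" for z
    using graph_dist_edge_le[OF u c(2)[OF that]] dist_c by simp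
  have T: "transmission V E u = (\<Sum>z\<in>V - {u}. graph_dist E u z)"
    using finite_V u by (simp add: transmission_def sum.remove)
  show ?thesis
  proof (cases "u = c")
    case True
    have "graph_dist E u z \<le> 1" if z: "z \<in> V - {u}" for z
    proof -
      have "{u, z} \<in> E" using z True c(2) by auto
      then show ?thesis using graph_dist_eq_1_iff[of u z] u z by simp
    qed
    then have "transmission V E u \<le> card (V - {u}) * 1"
      unfolding T using sum_bounded_above[of "V - {u}" "graph_dist E u" 1] by simp
    then show ?thesis using u finite_V assms(4) by simp
  next
    case False
    have "(\<Sum>z\<in>V - {u} - {c}. graph_dist E u z) \<le> card (V - {u} - {c}) * 2"
      using sum_bounded_above[of "V - {u} - {c}" "graph_dist E u" 2] dist_le_2 by simp
    moreover have "transmission V E u = graph_dist E u c + (\<Sum>z\<in>V - {u} - {c}. graph_dist E u z)"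
      unfolding T using finite_V c(1) False by (simp add: sum.remove)
    moreover have "card (V - {u} - {c}) = card V - 2"
      using finite_V c(1) u False by (simp add: card_Diff_singleton)
    ultimately show ?thesis
      using dist_c assms(4) by simp
  qed
qed

end

lemma star_edges_iff:
  assumes "i < n" "j < n"
  shows "{i, j} \<in> star_edges n \<longleftrightarrow> (i = 0 \<longleftrightarrow> j \<noteq> 0)"
  using assms unfolding star_edges_def by (auto simp: doubleton_eq_iff)

lemma universal_vertex_if_star_iso:
  assumes "graph_iso V E {0..<card V} (star_edges (card V))" "0 < card V"
  obtains c where "c \<in> V" "\<And>z. z \<in> V \<Longrightarrow> z \<noteq> c \<Longrightarrow> {c, z} \<in> E"
proof -
  obtain f where bij: "bij_betw f V {0..<card V}"
    and edges: "\<And>a b. a \<in> V \<Longrightarrow> b \<in> V \<Longrightarrow> {a, b} \<in> E \<longleftrightarrow> {f a, f b} \<in> star_edges (card V)"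
    using assms(1) unfolding graph_iso_def by blast
  obtain c where c: "c \<in> V" "f c = 0"
    using bij assms(2) by (metis atLeastLessThan_iff bij_betw_iff_bijections le0)
  have "{c, z} \<in> E" if "z \<in> V" "z \<noteq> c" for z
  proof -
    have "f z \<noteq> 0"
      using bij c that by (metis bij_betw_iff_bijections)
    moreover have "f z < card V" "f c < card V"
      using bij c(1) that(1) by (auto dest: bij_betw_apply)
    ultimately show ?thesis
      using edges[OF c(1) that(1)] star_edges_iff c(2) by simp
  qed
  then show ?thesis using that c(1) by blast
qed

locale tree_graph = connected_simple_graph +
  assumes acyclic: "\<not> has_cycle V E"
begin

lemma no_triangle:
  assumes "{a, b} \<in> E" "{b, c} \<in> E" "{c, a} \<in> E"
  shows False
proof -
  have "graph_path V E [a, b, c]"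
    using assms edge_vertices[OF assms(1)] edge_vertices[OF assms(2)] edge_vertices[OF assms(3)]
    unfolding graph_path_def by (auto simp: less_Suc_eq nth_Cons')
  then show False
    using acyclic assms(3) unfolding has_cycle_iff_closed_path by force
qed

lemma obtain_longest_path:
  assumes "graph_path V E zs"
  obtains xs where "graph_path V E xs" "\<And>ys. graph_path V E ys \<Longrightarrow> length ys \<le> length xs"
proof -
  have "length xs < Suc (card V)" if "graph_path V E xs" for xs
    using that finite_V card_mono distinct_card unfolding graph_path_def by (metis less_Suc_eq_le)
  then obtain xs where "graph_path V E xs" "\<forall>ys. graph_path V E ys \<longrightarrow> length ys \<le> length xs"
    using Lattices_Big.ex_has_greatest_nat[of "graph_path V E" zs length "Suc (card V)"] assms
    by blast
  then show ?thesis by (intro that) auto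
qed

text \<open>The first vertex of a longest path is a leaf: a further neighbour outside the
  path would extend it, one on the path would close a cycle.\<close>

lemma obtain_leaf:
  assumes "E \<noteq> {}"
  obtains v w where "{v, w} \<in> E" "\<And>z. {v, z} \<in> E \<Longrightarrow> z = w"
proof -
  obtain a b where ab: "{a, b} \<in> E"
    using assms by (rule obtain_edge)
  then have "graph_path V E [a, b]"
    using edge_vertices[OF ab] unfolding graph_path_def by auto
  then obtain xs where xs: "graph_path V E xs"
    and longest: "\<And>ys. graph_path V E ys \<Longrightarrow> length ys \<le> length xs"
    by (metis obtain_longest_path)
  then have "2 \<le> length xs"
    using \<open>graph_path V E [a, b]\<close> by fastforce
  then obtain v w ys where xs_eq: "xs = v # w # ys"
    by (metis Suc_le_length_iff numeral_2_eq_2)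
  have edge: "{v, w} \<in> E"
    using xs unfolding xs_eq graph_path_def by force
  have "z = w" if vz: "{v, z} \<in> E" for z
  proof -
    have z: "z \<in> V" "z \<noteq> v" using edge_vertices[OF vz] by auto
    have "z \<in> set xs"
    proof (rule ccontr)
      assume "z \<notin> set xs"
      then have "graph_path V E (z # xs)"
        using graph_path_Cons[OF xs] z vz by (simp add: xs_eq insert_commute)
      then show False using longest by fastforce
    qed
    then obtain j where j: "j < length xs" "xs ! j = z"
      by (meson in_set_conv_nth)
    have "j \<noteq> 0" using j z(2) unfolding xs_eq by (cases j) auto
    moreover have "\<not> 2 \<le> j"
    proof
      assume "2 \<le> j"
      moreover have "last (take (Suc j) xs) = z" "hd (take (Suc j) xs) = v"
        using j by (simp add: take_Suc_conv_app_nth) (simp add: xs_eq)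
      ultimately show False
        using acyclic graph_path_take[OF xs, of "Suc j"] j(1) vz
        unfolding has_cycle_iff_closed_path by (auto simp: insert_commute)
    qed
    ultimately have "j = 1" by simp
    then show "z = w" using j by (simp add: xs_eq)
  qed
  then show ?thesis using that edge by blast
qed

lemma star_iso_if_universal:
  assumes c: "c \<in> V" "\<And>z. z \<in> V \<Longrightarrow> z \<noteq> c \<Longrightarrow> {c, z} \<in> E"
  shows "graph_iso V E {0..<card V} (star_edges (card V))"
proof -
  have edge_iff: "{a, b} \<in> E \<longleftrightarrow> (a = c \<longleftrightarrow> b \<noteq> c)" if "a \<in> V" "b \<in> V" for a b
    using c that no_triangle[of c a b] edge_vertices(3)[of c c] by (auto simp: insert_commute)
  obtain g where g: "bij_betw g V {0..<card V}"
    using ex_bij_betw_finite_nat[OF finite_V] by blast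
  define f where "f = Transposition.transpose 0 (g c) \<circ> g"
  have "g c \<in> {0..<card V}" using g c(1) by (rule bij_betw_apply)
  then have bij: "bij_betw f V {0..<card V}"
    unfolding f_def using g by (auto intro: bij_betw_trans)
  have f0: "f z = 0 \<longleftrightarrow> z = c" if "z \<in> V" for z
  proof -
    have "g z = g c \<longleftrightarrow> z = c"
      using bij_betw_imp_inj_on[OF g] that c(1) by (rule inj_on_eq_iff)
    then show ?thesis by (auto simp: f_def transpose_eq_iff)
  qed
  show ?thesis
    unfolding graph_iso_def
  proof (intro exI[of _ f] conjI ballI)
    fix a b assume ab: "a \<in> V" "b \<in> V"
    have "f a < card V" "f b < card V"
      using bij ab by (auto dest: bij_betw_apply)
    show "{a, b} \<in> E \<longleftrightarrow> {f a, f b} \<in> star_edges (card V)"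
      unfolding edge_iff[OF ab] star_edges_iff[OF \<open>f a < card V\<close> \<open>f b < card V\<close>]
        f0[OF ab(1)] f0[OF ab(2)] by (rule refl)
  qed (rule bij)
qed

lemma far_from_leaf_if_not_star:
  assumes edge: "{v, w} \<in> E" and leaf: "\<And>z. {v, z} \<in> E \<Longrightarrow> z = w"
    and not_star: "\<not> graph_iso V E {0..<card V} (star_edges (card V))"
  obtains z where "z \<in> V" "3 \<le> graph_dist E v z"
proof -
  have "\<not> (\<forall>z\<in>V. graph_dist E v z \<le> 2)"
  proof
    assume "\<forall>z\<in>V. graph_dist E v z \<le> 2"
    then have "{w, z} \<in> E" if "z \<in> V" "z \<noteq> w" for z
      using leaf_neighbour_universal[OF edge leaf _ that] by blast
    then show False
      using star_iso_if_universal[OF edge_vertices(2)[OF edge]] not_star by blast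
  qed
  then show ?thesis
    using that by (auto simp: not_le Suc_le_eq)
qed

lemma obtain_feasible_le_star_bound:
  assumes "3 \<le> card V"
  obtains x where "x \<in> feasible V"
    "gamma_x E x \<le> real (card V) / (2 * real (card V) - 3)"
    "\<not> graph_iso V E {0..<card V} (star_edges (card V)) \<Longrightarrow>
      gamma_x E x < real (card V) / (2 * real (card V) - 3)"
proof -
  let ?n = "real (card V)"
  define d0 where "d0 = ?n / (2 * ?n - 3)"
  have d0: "0 < d0" "d0 \<le> 1" "d0 * (2 * ?n - 3) = ?n"
    using assms by (simp_all add: d0_def)
  have E: "E \<noteq> {}" using edges_nonempty assms by simp
  obtain v w where edge: "{v, w} \<in> E" and leaf: "\<And>z. {v, z} \<in> E \<Longrightarrow> z = w"
    using obtain_leaf[OF E] by blast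
  have v: "v \<in> V" using edge_vertices(1)[OF edge] .
  have sum_le: "(\<Sum>z\<in>V. tent E v d0 z) \<le> 0"
    using tent_sum_at_leaf(1)[OF edge leaf, of d0] d0 by simp
  have sum_less: "(\<Sum>z\<in>V. tent E v d0 z) < 0"
    if not_star: "\<not> graph_iso V E {0..<card V} (star_edges (card V))"
  proof -
    obtain z0 where z0: "z0 \<in> V" "3 \<le> graph_dist E v z0"
      using far_from_leaf_if_not_star[OF edge leaf not_star] .
    then have "4 \<le> card V"
      using transmission_bounds(2)[OF v z0(1)] by simp
    then have "d0 < 1" by (simp add: d0_def)
    then show ?thesis
      using tent_sum_at_leaf(2)[OF edge leaf, of d0] d0 z0 by simp
  qed
  obtain d where d: "0 \<le> d" "d \<le> d0" "(\<Sum>z\<in>V. tent E v d z) = 0"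
    using tent_zero_sum[OF v _ sum_le] d0(1) by auto
  show ?thesis
  proof (rule that[OF tent_feasible[OF v d(1,3)]])
    have "gamma_x E (tent E v d) \<le> d" by (rule gamma_x_tent_le[OF E v d(1)])
    then show "gamma_x E (tent E v d) \<le> ?n / (2 * ?n - 3)"
      using d(2) by (simp add: d0_def)
    assume "\<not> graph_iso V E {0..<card V} (star_edges (card V))"
    then have "d \<noteq> d0" using sum_less d(3) by auto
    then show "gamma_x E (tent E v d) < ?n / (2 * ?n - 3)"
      using \<open>gamma_x E (tent E v d) \<le> d\<close> d(2) by (simp add: d0_def)
  qed
qed

lemma gamma_le_star_bound:
  assumes "3 \<le> card V"
  shows "gamma V E \<le> real (card V) / (2 * real (card V) - 3)"
proof -
  obtain x where "x \<in> feasible V" "gamma_x E x \<le> real (card V) / (2 * real (card V) - 3)"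
    using obtain_feasible_le_star_bound[OF assms] by blast
  moreover have "E \<noteq> {}" using edges_nonempty assms by simp
  ultimately show ?thesis using gamma_le_gamma_x by (meson order_trans)
qed

lemma gamma_eq_star_bound_iff:
  assumes "3 \<le> card V"
  shows "gamma V E = real (card V) / (2 * real (card V) - 3) \<longleftrightarrow>
    graph_iso V E {0..<card V} (star_edges (card V))"
proof
  assume star: "graph_iso V E {0..<card V} (star_edges (card V))"
  obtain c where c: "c \<in> V" "\<And>z. z \<in> V \<Longrightarrow> z \<noteq> c \<Longrightarrow> {c, z} \<in> E"
    using universal_vertex_if_star_iso[OF star] assms by auto
  have "real (card V) / (2 * real (card V) - 3) \<le> gamma V E"
  proof (rule card_div_le_gamma)
    fix u assume "u \<in> V"
    then have "transmission V E u \<le> 2 * card V - 3"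
      using transmission_le_if_universal[OF c] assms by simp
    then show "real (transmission V E u) \<le> 2 * real (card V) - 3"
      using assms by (simp add: of_nat_diff)
  qed (use assms in simp_all)
  then show "gamma V E = real (card V) / (2 * real (card V) - 3)"
    using gamma_le_star_bound[OF assms] by simp
next
  assume eq: "gamma V E = real (card V) / (2 * real (card V) - 3)"
  show "graph_iso V E {0..<card V} (star_edges (card V))"
  proof (rule ccontr)
    assume "\<not> graph_iso V E {0..<card V} (star_edges (card V))"
    then obtain x where "x \<in> feasible V" "gamma_x E x < real (card V) / (2 * real (card V) - 3)"
      using obtain_feasible_le_star_bound[OF assms] by blast
    moreover have "E \<noteq> {}" using edges_nonempty assms by simp
    ultimately show False using gamma_le_gamma_x eq by fastforce
  qed
qed

end

theorem theorem4p8: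
  fixes V :: "'a set" and E :: "'a set set"
  assumes "is_tree V E" and "card V \<ge> 3"
  shows "2 / (real (card V) - 1) \<le> gamma V E \<and>
         gamma V E \<le> real (card V) / (2 * real (card V) - 3) \<and>
         (gamma V E = 2 / (real (card V) - 1) \<longleftrightarrow>
            graph_iso V E {0..<card V} (path_edges (card V))) \<and>
         (gamma V E = real (card V) / (2 * real (card V) - 3) \<longleftrightarrow>
            graph_iso V E {0..<card V} (star_edges (card V)))"
proof -
  interpret tree_graph V E
    using assms(1) by unfold_locales (auto simp: is_tree_def)
  have "2 \<le> card V" using assms(2) by simp
  then show ?thesis
    using path_bound_le_gamma gamma_eq_path_bound_iff gamma_le_star_bound gamma_eq_star_bound_iff
      assms(2) by blast
qed

end
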